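(* An element $T\in\underline{SST}(\nu)$ is distinguished if and only if $\sum_{j=1}^k\mathrm{wt}(T_j)=0$.
   Context: Identify a partition $\lambda=(a_1\ge a_2\ge\cdots)$ with $\sum_ja_j\epsilon_j$ in $\Lambda=\bigoplus_{j\ge1}\mathbb Z\epsilon_j$; put $\omega_i=\epsilon_1+\dots+\epsilon_i$; partitions are exactly the elements of $\Lambda$ with all $\omega$-coordinates $\ge0$. For $x,y\in\Lambda$, $y\le x$ means $x-y$ has all $\omega$-coordinates $\ge0$. $\mathcal P$ = set of partitions, $\mathcal P^k$ = $k$-tuples of partitions. $SST(\nu)$ = semistandard tableaux of shape $\nu$ with entries in $\mathbb Z_{>0}$, with the standard $\mathfrak{gl}_\infty$-crystal structure (operators $\tilde e_i$, $i\ge1$). For $T\in SST(\nu)$: $\mathrm{wt}(T)=\sum_j(\#\text{entries }j)\epsilon_j$, $\varepsilon_i(T)=\max\{m\ge0:\tilde e_i^mT\ne0\}$, $\varepsilon(T)=\sum_i\varepsilon_i(T)\omega_i$. $\mathrm{CLR}^\lambda_{\alpha,\nu}=\{T\in SST(\nu):\varepsilon(T)\le\alpha,\ \alpha+\mathrm{wt}(T)=\lambda\}$. Fix $k\ge1$ and partitions $\nu=(\nu_1^+,\nu_1^-,\dots,\nu_k^+,\nu_k^-)$; indices cyclic mod $k$ ($\lambda_0:=\lambda_k$). $\underline{SST}(\nu)=\prod_{i=1}^kSST(\nu_i^+)\times SST(\nu_i^-)$, elements $T=(T_1^+,T_1^-,\dots,T_k^+,T_k^-)$, $T_i=(T_i^+,T_i^-)$,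 $\mathrm{wt}(T_i)=\mathrm{wt}(T_i^+)-\mathrm{wt}(T_i^-)$. For $\lambda,\alpha\in\mathcal P^k$, $\underline{\mathrm{CLR}}^\lambda_{\alpha,\nu}=\prod_{i=1}^k\mathrm{CLR}^{\lambda_i}_{\alpha_i,\nu_i^+}\times\mathrm{CLR}^{\lambda_{i-1}}_{\alpha_i,\nu_i^-}$. $T\in\underline{SST}(\nu)$ is called distinguished if $T\in\underline{\mathrm{CLR}}^\lambda_{\alpha,\nu}$ for some $\lambda,\alpha\in\mathcal P^k$. *)

theory Defs
  imports Main
begin

text \<open>An element \<open>\<Sum>_{j\<ge>1} a_j \<epsilon>_j\<close> of \<Lambda> is represented by the function
  \<open>x :: nat \<Rightarrow> int\<close> with \<open>x j = a_j\<close> for \<open>j \<ge> 1\<close>, \<open>x 0 = 0\<close>, and finite support.\<close>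

definition Lam :: "(nat \<Rightarrow> int) set" where
  "Lam = {x. x 0 = 0 \<and> finite {j. x j \<noteq> 0}}"

text \<open>The i-th omega-coordinate (i \<ge> 1): since \<epsilon>_j = \<omega>_j - \<omega>_(j-1),
  x = \<Sum>_i (a_i - a_(i+1)) \<omega>_i.\<close>
definition omega_coord :: "(nat \<Rightarrow> int) \<Rightarrow> nat \<Rightarrow> int" where
  "omega_coord x i = x i - x (Suc i)"

definition lam_le :: "(nat \<Rightarrow> int) \<Rightarrow> (nat \<Rightarrow> int) \<Rightarrow> bool" where
  "lam_le y x \<longleftrightarrow> (\<forall>i\<ge>1. omega_coord (\<lambda>j. x j - y j) i \<ge> 0)"

definition is_partition :: "(nat \<Rightarrow> int) \<Rightarrow> bool" where
  "is_partition x \<longleftrightarrow> x \<in> Lam \<and> (\<forall>i\<ge>1. omega_coord x i \<ge> 0)"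

text \<open>A tableau of shape \<nu> is a function on cells (row, column), rows and columns
  numbered from 1; the cells are \<open>(r,c)\<close> with \<open>r \<ge> 1\<close>, \<open>1 \<le> c \<le> \<nu> r\<close>;
  outside the shape the function is 0 (canonical representative).\<close>

definition in_shape :: "(nat \<Rightarrow> int) \<Rightarrow> nat \<times> nat \<Rightarrow> bool" where
  "in_shape \<nu> rc \<longleftrightarrow> 1 \<le> fst rc \<and> 1 \<le> snd rc \<and> int (snd rc) \<le> \<nu> (fst rc)"

definition SST :: "(nat \<Rightarrow> int) \<Rightarrow> (nat \<times> nat \<Rightarrow> nat) set" where
  "SST \<nu> = {T. (\<forall>rc. \<not> in_shape \<nu> rc \<longrightarrow> T rc = 0)
     \<and> (\<forall>rc. in_shape \<nu> rc \<longrightarrow> T rc \<ge> 1)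
     \<and> (\<forall>r c. in_shape \<nu> (r, Suc c) \<longrightarrow> T (r, c) \<le> T (r, Suc c) \<or> c = 0)
     \<and> (\<forall>r c. in_shape \<nu> (Suc r, c) \<longrightarrow> T (r, c) < T (Suc r, c) \<or> r = 0)}"

definition wt :: "(nat \<Rightarrow> int) \<Rightarrow> (nat \<times> nat \<Rightarrow> nat) \<Rightarrow> nat \<Rightarrow> int" where
  "wt \<nu> T j = (if j = 0 then 0 else int (card {rc. in_shape \<nu> rc \<and> T rc = j}))"

definition num_rows :: "(nat \<Rightarrow> int) \<Rightarrow> nat" where
  "num_rows \<nu> = card {r. 1 \<le> r \<and> \<nu> r > 0}"

definition reading_cells :: "(nat \<Rightarrow> int) \<Rightarrow> (nat \<times> nat) list" where
  "reading_cells \<nu> = concat (map (\<lambda>r. map (\<lambda>c. (r, c)) [1..<nat (\<nu> r) + 1])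
                                  (rev [1..<num_rows \<nu> + 1]))"

text \<open>Bracketing: scanning the word left to right, each letter i+1 is pushed,
  each letter i cancels the most recent unpaired i+1 (if any).  The result is the
  stack of positions of unpaired letters i+1 (most recent first).\<close>
fun sig_stack :: "nat \<Rightarrow> (nat \<times> nat) list \<Rightarrow> nat list \<Rightarrow> nat list" where
  "sig_stack i [] st = st"
| "sig_stack i ((p, x) # w) st =
     (if x = Suc i then sig_stack i w (p # st)
      else if x = i then sig_stack i w (drop 1 st)
      else sig_stack i w st)"

text \<open>Kashiwara operator \<open>e~_i\<close>: change the leftmost unpaired i+1 into i;
  \<open>None\<close> represents 0.\<close>
definition e_op :: "(nat \<Rightarrow> int) \<Rightarrow> nat \<Rightarrow> (nat \<times> nat \<Rightarrow> nat) \<Rightarrow> (nat \<times> nat \<Rightarrow> nat) option" where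
  "e_op \<nu> i T =
     (let cells = reading_cells \<nu>;
          st = sig_stack i (zip [0..<length cells] (map T cells)) []
      in if st = [] then None else Some (T (cells ! last st := i)))"

definition e_iter :: "(nat \<Rightarrow> int) \<Rightarrow> nat \<Rightarrow> nat \<Rightarrow> (nat \<times> nat \<Rightarrow> nat) \<Rightarrow> (nat \<times> nat \<Rightarrow> nat) option" where
  "e_iter \<nu> i m T = ((\<lambda>ot. Option.bind ot (e_op \<nu> i)) ^^ m) (Some T)"

definition crys_eps :: "(nat \<Rightarrow> int) \<Rightarrow> nat \<Rightarrow> (nat \<times> nat \<Rightarrow> nat) \<Rightarrow> nat" where
  "crys_eps \<nu> i T = (GREATEST m. e_iter \<nu> i m T \<noteq> None)"

text \<open>\<open>\<epsilon>(T) = \<Sum>_i \<epsilon>_i(T) \<omega>_i\<close>, as an element of \<Lambda>: its j-th coordinate is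
  \<open>\<Sum>_{i\<ge>j} \<epsilon>_i(T)\<close> (a finite sum).\<close>
definition eps_vec :: "(nat \<Rightarrow> int) \<Rightarrow> (nat \<times> nat \<Rightarrow> nat) \<Rightarrow> nat \<Rightarrow> int" where
  "eps_vec \<nu> T j = (if j = 0 then 0 else
      (\<Sum>i\<in>{i. j \<le> i \<and> crys_eps \<nu> i T \<noteq> 0}. int (crys_eps \<nu> i T)))"

definition CLR :: "(nat \<Rightarrow> int) \<Rightarrow> (nat \<Rightarrow> int) \<Rightarrow> (nat \<Rightarrow> int) \<Rightarrow> (nat \<times> nat \<Rightarrow> nat) set" where
  "CLR lam alpha \<nu> = {T \<in> SST \<nu>. lam_le (eps_vec \<nu> T) alpha \<and> (\<lambda>j. alpha j + wt \<nu> T j) = lam}"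

definition uSST :: "nat \<Rightarrow> (nat \<Rightarrow> nat \<Rightarrow> int) \<Rightarrow> (nat \<Rightarrow> nat \<Rightarrow> int)
     \<Rightarrow> ((nat \<Rightarrow> nat \<times> nat \<Rightarrow> nat) \<times> (nat \<Rightarrow> nat \<times> nat \<Rightarrow> nat)) set" where
  "uSST k nup num = {(Tp, Tm). \<forall>i<k. Tp i \<in> SST (nup i) \<and> Tm i \<in> SST (num i)}"

definition distinguished :: "nat \<Rightarrow> (nat \<Rightarrow> nat \<Rightarrow> int) \<Rightarrow> (nat \<Rightarrow> nat \<Rightarrow> int)
     \<Rightarrow> (nat \<Rightarrow> nat \<times> nat \<Rightarrow> nat) \<Rightarrow> (nat \<Rightarrow> nat \<times> nat \<Rightarrow> nat) \<Rightarrow> bool" where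
  "distinguished k nup num Tp Tm \<longleftrightarrow>
     (\<exists>lam alpha :: nat \<Rightarrow> nat \<Rightarrow> int.
        (\<forall>i<k. is_partition (lam i) \<and> is_partition (alpha i)) \<and>
        (\<forall>i<k. Tp i \<in> CLR (lam i) (alpha i) (nup i) \<and>
               Tm i \<in> CLR (lam ((i + k - 1) mod k)) (alpha i) (num i)))"

end

theory Submission
  imports Defs
begin

text \<open>Necessity: the weight conditions of \<open>CLR\<close> give \<open>wt(T_i) = \<lambda>_i - \<lambda>_(i-1)\<close>, which
  telescopes cyclically to 0. Sufficiency: with the partial sums \<open>S_i = \<Sum>_(l<i) wt(T_l)\<close>
  (so \<open>S_0 = S_k = 0\<close>) take \<open>\<lambda>_i = S_(i+1)\<close> and \<open>\<alpha>_i = S_i - wt(T_i^-)\<close>, both shifted by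
  the staircase partition \<open>(CM, C(M-1), \<dots>, C)\<close>, where \<open>M\<close> bounds all entries. The
  weight conditions then hold by construction, and once \<open>C\<close> dominates twice the size of
  these vectors plus every \<open>\<epsilon>_j(T)\<close> (which vanishes for \<open>j \<ge> M\<close>), the shifted vectors
  are partitions and dominate \<open>\<epsilon>(T)\<close>.\<close>

lemma sig_stack_no_upper_letter:
  "\<forall>(p, x)\<in>set w. x \<noteq> Suc i \<Longrightarrow> sig_stack i w [] = []"
proof (induction i w "[] :: nat list" rule: sig_stack.induct)
  case (2 i p x w)
  then show ?case by auto
qed simp

lemma crys_eps_eq_0_if_e_op_None:
  assumes "e_op \<nu> i T = None"
  shows "crys_eps \<nu> i T = 0"
proof -
  have vanish: "e_iter \<nu> i (Suc m) T = None" for m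
    by (induction m) (simp_all add: e_iter_def assms)
  have "(GREATEST m. e_iter \<nu> i m T \<noteq> None) = 0"
  proof (rule Greatest_equality)
    show "e_iter \<nu> i 0 T \<noteq> None"
      by (simp add: e_iter_def)
  next
    fix m
    assume "e_iter \<nu> i m T \<noteq> None"
    then show "m \<le> 0"
      using vanish by (cases m) auto
  qed
  then show ?thesis
    by (simp add: crys_eps_def)
qed

lemma crys_eps_eq_0_if_entries_le:
  assumes "\<forall>rc. T rc \<le> i"
  shows "crys_eps \<nu> i T = 0"
proof -
  let ?w = "zip [0..<length (reading_cells \<nu>)] (map T (reading_cells \<nu>))"
  have "\<forall>(p, x)\<in>set ?w. x \<noteq> Suc i"
    using assms by (auto dest!: set_zip_rightD) (metis Suc_n_not_le_n)
  then have "e_op \<nu> i T = None"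
    by (simp add: e_op_def sig_stack_no_upper_letter)
  then show ?thesis
    by (rule crys_eps_eq_0_if_e_op_None)
qed

lemma omega_coord_eps_vec:
  assumes "finite {i. crys_eps \<nu> i T \<noteq> 0}" and "1 \<le> j"
  shows "omega_coord (eps_vec \<nu> T) j = int (crys_eps \<nu> j T)"
proof -
  let ?N = "\<lambda>j. {i. j \<le> i \<and> crys_eps \<nu> i T \<noteq> 0}"
  have fin: "finite (?N (Suc j))"
    using assms(1) by (rule rev_finite_subset) auto
  have "?N j = (if crys_eps \<nu> j T = 0 then ?N (Suc j) else insert j (?N (Suc j)))"
    by (auto simp: Suc_le_eq order_le_less)
  then show ?thesis
    using assms(2) fin by (simp add: omega_coord_def eps_vec_def)
qed

lemma lam_le_eps_vec_iff:
  assumes "finite {i. crys_eps \<nu> i T \<noteq> 0}"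
  shows "lam_le (eps_vec \<nu> T) alpha \<longleftrightarrow> (\<forall>i\<ge>1. int (crys_eps \<nu> i T) \<le> omega_coord alpha i)"
proof -
  have "omega_coord (\<lambda>j. alpha j - eps_vec \<nu> T j) i = omega_coord alpha i - int (crys_eps \<nu> i T)"
    if "1 \<le> i" for i
    using omega_coord_eps_vec[OF assms that] by (simp add: omega_coord_def)
  then show ?thesis
    by (simp add: lam_le_def)
qed

text \<open>Truncated subtraction makes the staircase vanish beyond row \<open>M\<close>.\<close>

definition staircase :: "int \<Rightarrow> nat \<Rightarrow> nat \<Rightarrow> int" where
  "staircase C M j = (if j = 0 then 0 else C * int (Suc M - j))"

lemma omega_coord_staircase:
  "1 \<le> j \<Longrightarrow> omega_coord (staircase C M) j = (if j \<le> M then C else 0)"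
  by (simp add: omega_coord_def staircase_def Suc_diff_le algebra_simps)

lemma omega_coord_add_staircase_ge:
  assumes "\<forall>j>M. x j = 0" and "\<forall>j. \<bar>x j\<bar> \<le> D" and "1 \<le> j"
  shows "omega_coord (\<lambda>j. x j + staircase C M j) j \<ge> (if j \<le> M then C - 2 * D else 0)"
proof -
  have "omega_coord (\<lambda>j. x j + staircase C M j) j = omega_coord x j + omega_coord (staircase C M) j"
    by (simp add: omega_coord_def)
  moreover have "omega_coord x j \<ge> - 2 * D"
    using assms(2)[rule_format, of j] assms(2)[rule_format, of "Suc j"]
    by (simp add: omega_coord_def abs_le_iff)
  moreover have "omega_coord x j = 0" if "\<not> j \<le> M"
    using assms(1) that by (simp add: omega_coord_def)
  ultimately show ?thesis
    using omega_coord_staircase[OF assms(3)] by auto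
qed

lemma add_staircase_in_Lam:
  assumes "x 0 = 0" and "\<forall>j>M. x j = 0"
  shows "(\<lambda>j. x j + staircase C M j) \<in> Lam"
proof -
  have "{j. x j + staircase C M j \<noteq> 0} \<subseteq> {..M}"
  proof
    fix j
    assume "j \<in> {j. x j + staircase C M j \<noteq> 0}"
    then show "j \<in> {..M}"
      using assms(2) by (cases "M < j") (auto simp: staircase_def)
  qed
  then have "finite {j. x j + staircase C M j \<noteq> 0}"
    by (rule finite_subset) simp
  then show ?thesis
    using assms(1) by (simp add: Lam_def staircase_def)
qed

lemma add_staircase_is_partition:
  assumes "x 0 = 0" and "\<forall>j>M. x j = 0" and "\<forall>j. \<bar>x j\<bar> \<le> D" and "2 * D \<le> C"
  shows "is_partition (\<lambda>j. x j + staircase C M j)"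
  unfolding is_partition_def
proof (intro conjI allI impI)
  show "(\<lambda>j. x j + staircase C M j) \<in> Lam"
    using assms(1,2) by (rule add_staircase_in_Lam)
next
  fix j :: nat
  assume "1 \<le> j"
  with omega_coord_add_staircase_ge[OF assms(2,3) this, of C] assms(4)
  show "0 \<le> omega_coord (\<lambda>j. x j + staircase C M j) j"
    by (cases "j \<le> M") auto
qed

lemma add_staircase_dominates_eps_vec:
  assumes "\<forall>j>M. x j = 0" and "\<forall>j. \<bar>x j\<bar> \<le> D" and "2 * D + int E \<le> C"
    and "\<forall>i. crys_eps \<nu> i T \<le> E" and "\<forall>i>M. crys_eps \<nu> i T = 0"
  shows "lam_le (eps_vec \<nu> T) (\<lambda>j. x j + staircase C M j)"
proof -
  have "finite {i. crys_eps \<nu> i T \<noteq> 0}"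
    using assms(5) by (intro finite_subset[OF _ finite_atMost[of M]])
      (metis (mono_tags) atMost_iff leI mem_Collect_eq subsetI)
  moreover have "int (crys_eps \<nu> i T) \<le> omega_coord (\<lambda>j. x j + staircase C M j) i" if "1 \<le> i" for i
  proof (cases "i \<le> M")
    case True
    have "int (crys_eps \<nu> i T) \<le> int E"
      using assms(4) by simp
    then show ?thesis
      using omega_coord_add_staircase_ge[OF assms(1,2) that, of C] assms(3) True by simp
  next
    case False
    then show ?thesis
      using omega_coord_add_staircase_ge[OF assms(1,2) that, of C] assms(5) by simp
  qed
  ultimately show ?thesis
    by (simp add: lam_le_eps_vec_iff)
qed

lemma finite_in_shape:
  assumes "\<nu> \<in> Lam"
  shows "finite {rc. in_shape \<nu> rc}"
proof -
  have "{rc. in_shape \<nu> rc} \<subseteq> Sigma {r. \<nu> r \<noteq> 0} (\<lambda>r. {..nat (\<nu> r)})"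
    by (auto simp: in_shape_def)
  moreover have "finite (Sigma {r. \<nu> r \<noteq> 0} (\<lambda>r. {..nat (\<nu> r)}))"
    using assms by (auto simp: Lam_def)
  ultimately show ?thesis
    by (rule finite_subset)
qed

lemma finite_range_SST:
  assumes "T \<in> SST \<nu>" and "\<nu> \<in> Lam"
  shows "finite (range T)"
proof -
  have "range T \<subseteq> insert 0 (T ` {rc. in_shape \<nu> rc})"
    using assms(1) by (auto simp: SST_def)
  then show ?thesis
    using finite_in_shape[OF assms(2)] by (simp add: finite_subset)
qed

lemma uSST_entries_bounded:
  assumes "\<forall>i<k. nup i \<in> Lam \<and> num i \<in> Lam" and "(Tp, Tm) \<in> uSST k nup num"
  obtains M where "\<And>i rc. i < k \<Longrightarrow> Tp i rc \<le> M" and "\<And>i rc. i < k \<Longrightarrow> Tm i rc \<le> M"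
proof -
  have "finite (range (Tp i)) \<and> finite (range (Tm i))" if "i < k" for i
    using assms that by (auto simp: uSST_def intro: finite_range_SST)
  then have "finite (\<Union>i<k. range (Tp i) \<union> range (Tm i))"
    by simp
  then obtain M where M: "\<forall>n\<in>(\<Union>i<k. range (Tp i) \<union> range (Tm i)). n \<le> M"
    unfolding finite_nat_set_iff_bounded_le by blast
  show ?thesis
  proof (rule that)
    fix i rc
    assume "i < k"
    then show "Tp i rc \<le> M" "Tm i rc \<le> M"
      using M by blast+
  qed
qed

lemma wt_eq_0_if_entries_le:
  assumes "\<forall>rc. T rc \<le> M" and "M < j"
  shows "wt \<nu> T j = 0"
proof -
  have "{rc. in_shape \<nu> rc \<and> T rc = j} = {}"
    using assms by (metis (mono_tags) empty_Collect_eq leD)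
  then show ?thesis
    unfolding wt_def by (simp only: card.empty) simp
qed

lemma uniform_bound_if_eventually_bounded:
  fixes f :: "'i \<Rightarrow> nat \<Rightarrow> 'a::linorder"
  assumes "finite I" and "\<forall>i\<in>I. \<forall>j>M. f i j \<le> c"
  shows "\<exists>B. \<forall>i\<in>I. \<forall>j. f i j \<le> B"
proof (intro exI ballI allI)
  let ?B = "Max (insert c ((\<lambda>(i, j). f i j) ` (I \<times> {..M})))"
  have fin: "finite (insert c ((\<lambda>(i, j). f i j) ` (I \<times> {..M})))"
    using assms(1) by simp
  fix i j
  assume "i \<in> I"
  show "f i j \<le> ?B"
  proof (cases "j \<le> M")
    case True
    with \<open>i \<in> I\<close> show ?thesis
      by (intro Max_ge[OF fin]) auto
  next
    case False
    with \<open>i \<in> I\<close> assms(2) have "f i j \<le> c"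
      by simp
    also have "c \<le> ?B"
      by (rule Max_ge[OF fin]) simp
    finally show ?thesis .
  qed
qed

lemma sum_lessThan_cyclic_pred:
  fixes f :: "nat \<Rightarrow> 'a::comm_monoid_add"
  assumes "1 \<le> k"
  shows "(\<Sum>i<k. f ((i + k - 1) mod k)) = (\<Sum>i<k. f i)"
proof -
  obtain k' where k: "k = Suc k'"
    using assms by (cases k) auto
  have "(\<Sum>i<Suc k'. f ((i + Suc k' - 1) mod Suc k')) = f k' + (\<Sum>i<k'. f ((Suc i + k') mod Suc k'))"
    by (simp only: sum.lessThan_Suc_shift) simp
  also have "(\<Sum>i<k'. f ((Suc i + k') mod Suc k')) = (\<Sum>i<k'. f i)"
    by (intro sum.cong) (simp_all flip: add_Suc_right)
  finally show ?thesis
    using k by (simp add: add.commute)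
qed

lemma partial_sum_cyclic_pred:
  fixes f :: "nat \<Rightarrow> 'a::comm_monoid_add"
  assumes "i < k" and "(\<Sum>l<k. f l) = 0"
  shows "(\<Sum>l<Suc ((i + k - 1) mod k). f l) = (\<Sum>l<i. f l)"
proof (cases i)
  case 0
  then have "Suc ((i + k - 1) mod k) = k"
    using assms(1) by simp
  then show ?thesis
    using 0 assms(2) by simp
next
  case (Suc i')
  then have "(i + k - 1) mod k = i'"
    using assms(1) by simp
  then show ?thesis
    using Suc by simp
qed

lemma add_staircase_in_CLR:
  assumes "T \<in> SST \<nu>" and "\<forall>j>M. x j = 0" and "\<forall>j. \<bar>x j\<bar> \<le> D" and "2 * D + int E \<le> C"
    and "\<forall>i. crys_eps \<nu> i T \<le> E" and "\<forall>i>M. crys_eps \<nu> i T = 0"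
    and "\<forall>j. x j + wt \<nu> T j = y j"
  shows "T \<in> CLR (\<lambda>j. y j + staircase C M j) (\<lambda>j. x j + staircase C M j) \<nu>"
proof -
  have "(\<lambda>j. x j + staircase C M j + wt \<nu> T j) = (\<lambda>j. y j + staircase C M j)"
    using assms(7) by (auto simp: fun_eq_iff algebra_simps)
  then show ?thesis
    using assms(1) add_staircase_dominates_eps_vec[OF assms(2-6)] by (simp add: CLR_def)
qed

lemma distinguished_imp_weight_sum_eq_0:
  assumes "1 \<le> k" and "distinguished k nup num Tp Tm"
  shows "(\<Sum>j<k. wt (nup j) (Tp j) m - wt (num j) (Tm j) m) = 0"
proof -
  obtain lam alpha :: "nat \<Rightarrow> nat \<Rightarrow> int" where
    clr: "\<forall>i<k. Tp i \<in> CLR (lam i) (alpha i) (nup i) \<and>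
                Tm i \<in> CLR (lam ((i + k - 1) mod k)) (alpha i) (num i)"
    using assms(2) unfolding distinguished_def by blast
  have "wt (nup i) (Tp i) m - wt (num i) (Tm i) m = lam i m - lam ((i + k - 1) mod k) m"
    if "i < k" for i
  proof -
    from clr that have "(\<lambda>j. alpha i j + wt (nup i) (Tp i) j) = lam i"
      and "(\<lambda>j. alpha i j + wt (num i) (Tm i) j) = lam ((i + k - 1) mod k)"
      by (auto simp: CLR_def)
    from fun_cong[OF this(1), of m] fun_cong[OF this(2), of m] show ?thesis
      by simp
  qed
  then have "(\<Sum>j<k. wt (nup j) (Tp j) m - wt (num j) (Tm j) m)
      = (\<Sum>j<k. lam j m) - (\<Sum>j<k. lam ((j + k - 1) mod k) m)"
    by (simp add: sum_subtractf)
  also have "\<dots> = 0"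
    using sum_lessThan_cyclic_pred[OF assms(1), of "\<lambda>i. lam i m"] by simp
  finally show ?thesis .
qed

lemma weight_sum_eq_0_imp_distinguished:
  assumes "\<forall>i<k. nup i \<in> Lam \<and> num i \<in> Lam" and "(Tp, Tm) \<in> uSST k nup num"
    and "\<forall>m. (\<Sum>j<k. wt (nup j) (Tp j) m - wt (num j) (Tm j) m) = 0"
  shows "distinguished k nup num Tp Tm"
proof -
  have sst: "Tp i \<in> SST (nup i)" "Tm i \<in> SST (num i)" if "i < k" for i
    using assms(2) that by (auto simp: uSST_def)
  obtain M where entries: "\<And>i rc. i < k \<Longrightarrow> Tp i rc \<le> M" "\<And>i rc. i < k \<Longrightarrow> Tm i rc \<le> M"
    using uSST_entries_bounded[OF assms(1,2)] by blast
  have eps_vanish: "crys_eps (nup i) j (Tp i) = 0" "crys_eps (num i) j (Tm i) = 0"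
    if "i < k" "M \<le> j" for i j
    using that entries by (meson crys_eps_eq_0_if_entries_le le_trans)+
  have wt_vanish: "wt (nup i) (Tp i) j = 0" "wt (num i) (Tm i) j = 0" if "i < k" "M < j" for i j
    using that entries wt_eq_0_if_entries_le by blast+
  define S where "S i j = (\<Sum>l<i. wt (nup l) (Tp l) j - wt (num l) (Tm l) j)" for i j
  define x where "x i j = S i j - wt (num i) (Tm i) j" for i j
  have S_vanish: "S i j = 0" if "i \<le> k" "M < j" for i j
    unfolding S_def using that wt_vanish by (intro sum.neutral) auto
  have x_vanish: "x i j = 0" if "i < k" "M < j" for i j
    using that S_vanish wt_vanish by (simp add: x_def)
  have "\<exists>D. \<forall>i\<in>{..<k}. \<forall>j. max \<bar>x i j\<bar> \<bar>S (Suc i) j\<bar> \<le> D"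
    using S_vanish x_vanish by (intro uniform_bound_if_eventually_bounded[where c = 0 and M = M]) auto
  then obtain D where D: "\<bar>x i j\<bar> \<le> D" "\<bar>S (Suc i) j\<bar> \<le> D" if "i < k" for i j
    by auto
  have "\<exists>E. \<forall>i\<in>{..<k}. \<forall>j. max (crys_eps (nup i) j (Tp i)) (crys_eps (num i) j (Tm i)) \<le> E"
    using eps_vanish by (intro uniform_bound_if_eventually_bounded[where c = 0 and M = M]) auto
  then obtain E where E: "crys_eps (nup i) j (Tp i) \<le> E" "crys_eps (num i) j (Tm i) \<le> E"
    if "i < k" for i j
    by auto
  define C where "C = 2 * D + int E"
  define lam where "lam i j = S (Suc i) j + staircase C M j" for i j
  define alpha where "alpha i j = x i j + staircase C M j" for i j
  have S0: "S i 0 = 0" for i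
    by (simp add: S_def wt_def)
  have "is_partition (lam i) \<and> is_partition (alpha i) \<and>
        Tp i \<in> CLR (lam i) (alpha i) (nup i) \<and>
        Tm i \<in> CLR (lam ((i + k - 1) mod k)) (alpha i) (num i)" if "i < k" for i
  proof (intro conjI)
    show "is_partition (lam i)"
      unfolding lam_def using that S0 S_vanish D
      by (intro add_staircase_is_partition[where D = D]) (auto simp: C_def)
    show "is_partition (alpha i)"
      unfolding alpha_def using that S0 x_vanish D
      by (intro add_staircase_is_partition[where D = D]) (auto simp: C_def x_def wt_def)
    show "Tp i \<in> CLR (lam i) (alpha i) (nup i)"
      unfolding lam_def alpha_def using that sst x_vanish D E eps_vanish
      by (intro add_staircase_in_CLR[where D = D and E = E]) (auto simp: C_def x_def S_def)
    have "S (Suc ((i + k - 1) mod k)) j = S i j" for j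
      unfolding S_def using partial_sum_cyclic_pred[OF that] assms(3) by blast
    then have lam_pred: "lam ((i + k - 1) mod k) = (\<lambda>j. S i j + staircase C M j)"
      by (simp add: lam_def fun_eq_iff)
    show "Tm i \<in> CLR (lam ((i + k - 1) mod k)) (alpha i) (num i)"
      unfolding lam_pred alpha_def using that sst x_vanish D E eps_vanish
      by (intro add_staircase_in_CLR[where D = D and E = E]) (auto simp: C_def x_def)
  qed
  then show ?thesis
    unfolding distinguished_def by blast
qed

theorem mainTheorem8:
  fixes k :: nat
    and nup num :: "nat \<Rightarrow> nat \<Rightarrow> int"
    and Tp Tm :: "nat \<Rightarrow> nat \<times> nat \<Rightarrow> nat"
  assumes "k \<ge> 1"
    and "\<forall>i<k. is_partition (nup i) \<and> is_partition (num i)"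
    and "(Tp, Tm) \<in> uSST k nup num"
  shows "distinguished k nup num Tp Tm \<longleftrightarrow>
         (\<lambda>m. \<Sum>j<k. wt (nup j) (Tp j) m - wt (num j) (Tm j) m) = (\<lambda>m. 0)"
proof
  assume "distinguished k nup num Tp Tm"
  then show "(\<lambda>m. \<Sum>j<k. wt (nup j) (Tp j) m - wt (num j) (Tm j) m) = (\<lambda>m. 0)"
    using distinguished_imp_weight_sum_eq_0[OF assms(1)] by (intro ext)
next
  assume "(\<lambda>m. \<Sum>j<k. wt (nup j) (Tp j) m - wt (num j) (Tm j) m) = (\<lambda>m. 0)"
  then have "\<forall>m. (\<Sum>j<k. wt (nup j) (Tp j) m - wt (num j) (Tm j) m) = 0"
    by (simp add: fun_eq_iff)
  moreover have "\<forall>i<k. nup i \<in> Lam \<and> num i \<in> Lam"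
    using assms(2) by (simp add: is_partition_def)
  ultimately show "distinguished k nup num Tp Tm"
    using assms(3) by (intro weight_sum_eq_0_imp_distinguished)
qed

end
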